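(* Let $R>1$ and let $f$ be a circular tractrix with parameter $R$ and constants $c_1,c_2$ with $c_1^2+c_2^2=1$. Then $f'(t)=0$ if and only if $t=0$, and both arcs $f|_{[0,\infty)}$ and $f|_{(-\infty,0]}$ have infinite length.
   Context: Fix $R>1$, $\lambda=\frac{\sqrt{R^2-1}}{R}$, and real constants $c_1,c_2$ with $c_1^2+c_2^2=1$. The circular tractrix is $f(t)=\big(\xi_1\cos\tfrac tR+\xi_2\sin\tfrac tR,\ -\xi_2\cos\tfrac tR+\xi_1\sin\tfrac tR,\ \xi_3\big)$, $t\in\mathbb R$, with $\xi_1=\frac{(R-\frac1R)\cosh\lambda t}{\frac{c_1}{R}+\cosh\lambda t}$, $\xi_2=\frac{\lambda\sinh\lambda t}{\frac{c_1}{R}+\cosh\lambda t}$, $\xi_3=\frac{\lambda c_2}{\frac{c_1}{R}+\cosh\lambda t}$. *)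

theory Defs
  imports "HOL-Analysis.Analysis"
begin

definition tractrix_lambda :: "real \<Rightarrow> real" where
  "tractrix_lambda R = sqrt (R\<^sup>2 - 1) / R"

definition xi1 :: "real \<Rightarrow> real \<Rightarrow> real \<Rightarrow> real" where
  "xi1 R c1 t = ((R - 1/R) * cosh (tractrix_lambda R * t)) / (c1 / R + cosh (tractrix_lambda R * t))"

definition xi2 :: "real \<Rightarrow> real \<Rightarrow> real \<Rightarrow> real" where
  "xi2 R c1 t = (tractrix_lambda R * sinh (tractrix_lambda R * t)) / (c1 / R + cosh (tractrix_lambda R * t))"

definition xi3 :: "real \<Rightarrow> real \<Rightarrow> real \<Rightarrow> real \<Rightarrow> real" where
  "xi3 R c1 c2 t = (tractrix_lambda R * c2) / (c1 / R + cosh (tractrix_lambda R * t))"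

definition circular_tractrix :: "real \<Rightarrow> real \<Rightarrow> real \<Rightarrow> real \<Rightarrow> real^3" where
  "circular_tractrix R c1 c2 t =
     vector [ xi1 R c1 t * cos (t / R) + xi2 R c1 t * sin (t / R),
              - xi2 R c1 t * cos (t / R) + xi1 R c1 t * sin (t / R),
              xi3 R c1 c2 t ]"

definition curve_length :: "(real \<Rightarrow> 'a::metric_space) \<Rightarrow> real set \<Rightarrow> ereal" where
  "curve_length f S =
     (SUP ts \<in> {ts :: real list. sorted ts \<and> set ts \<subseteq> S}.
        ereal (\<Sum>i < length ts - 1. dist (f (ts ! i)) (f (ts ! (i + 1)))))"

end

theory Submission
  imports Defs
begin

text \<open>In the frame
  \<open>u(t) = (cos(t/R), sin(t/R), 0)\<close>, \<open>v(t) = (sin(t/R), -cos(t/R), 0)\<close>, \<open>e\<^sub>3\<close>,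
  rotating with angular speed \<open>1/R\<close>, the tractrix is
  \<open>f = \<xi>\<^sub>1 u + \<xi>\<^sub>2 v + \<xi>\<^sub>3 e\<^sub>3\<close>, and the \<open>v\<close>-component of \<open>f'\<close> is
  \<open>\<xi>\<^sub>2' - \<xi>\<^sub>1/R = -(\<lambda> sinh(\<lambda>t) / D)\<^sup>2\<close> with \<open>D = c\<^sub>1/R + cosh(\<lambda>t) > 0\<close>.
  So \<open>f'(t) = 0\<close> forces \<open>sinh(\<lambda>t) = 0\<close>, i.e. \<open>t = 0\<close>, where indeed all three
  components vanish.

  Half a turn later \<open>u\<close> and \<open>v\<close> change sign, so the \<open>u\<close>-component of
  \<open>f(t) - f(t + \<pi>R)\<close> is \<open>\<xi>\<^sub>1(t) + \<xi>\<^sub>1(t + \<pi>R) \<ge> 2(R - 1)\<close>: inscribed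
  polygons with vertices \<open>\<pi>R\<close> apart have unbounded length in either direction.\<close>

definition radial_dir :: "real \<Rightarrow> real \<Rightarrow> real^3" where
  "radial_dir R t = vector [cos (t / R), sin (t / R), 0]"

definition tangential_dir :: "real \<Rightarrow> real \<Rightarrow> real^3" where
  "tangential_dir R t = vector [sin (t / R), - cos (t / R), 0]"

definition vertical_dir :: "real^3" where
  "vertical_dir = vector [0, 0, 1]"

lemma cos_div_has_real_derivative:
  "((\<lambda>t. cos (t / R)) has_real_derivative - sin (t / R) / R) (at t)"
  using DERIV_chain2 [OF DERIV_cos DERIV_cdivide [OF DERIV_ident, of R]] by simp

lemma sin_div_has_real_derivative:
  "((\<lambda>t. sin (t / R)) has_real_derivative cos (t / R) / R) (at t)"
  using DERIV_chain2 [OF DERIV_sin DERIV_cdivide [OF DERIV_ident, of R]] by simp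

lemma radial_dir_eq:
  "radial_dir R t = cos (t / R) *\<^sub>R vector [1, 0, 0] + sin (t / R) *\<^sub>R vector [0, 1, 0]"
  by (simp add: radial_dir_def vec_eq_iff forall_3)

lemma tangential_dir_eq:
  "tangential_dir R t = sin (t / R) *\<^sub>R vector [1, 0, 0] - cos (t / R) *\<^sub>R vector [0, 1, 0]"
  by (simp add: tangential_dir_def vec_eq_iff forall_3)

lemma radial_dir_has_vector_derivative:
  "(radial_dir R has_vector_derivative - (tangential_dir R t /\<^sub>R R)) (at t)"
  unfolding radial_dir_eq [abs_def] tangential_dir_eq
  by (rule derivative_eq_intros cos_div_has_real_derivative sin_div_has_real_derivative
      has_vector_derivative_const refl)+ (simp add: algebra_simps divide_inverse_commute)

lemma tangential_dir_has_vector_derivative: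
  "(tangential_dir R has_vector_derivative radial_dir R t /\<^sub>R R) (at t)"
  unfolding radial_dir_eq tangential_dir_eq [abs_def]
  by (rule derivative_eq_intros cos_div_has_real_derivative sin_div_has_real_derivative
      has_vector_derivative_const refl)+ (simp add: algebra_simps divide_inverse_commute)

lemma rotating_frame_has_vector_derivative:
  assumes "(a has_real_derivative a') (at t)" "(b has_real_derivative b') (at t)"
    "(c has_real_derivative c') (at t)"
  shows "((\<lambda>t. a t *\<^sub>R radial_dir R t + b t *\<^sub>R tangential_dir R t + c t *\<^sub>R vertical_dir)
    has_vector_derivative
      (a' + b t / R) *\<^sub>R radial_dir R t + (b' - a t / R) *\<^sub>R tangential_dir R t + c' *\<^sub>R vertical_dir)
    (at t)"
  by (rule derivative_eq_intros assms radial_dir_has_vector_derivative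
      tangential_dir_has_vector_derivative has_vector_derivative_const refl)+
    (simp add: algebra_simps divide_inverse)

lemma inner_radial_dir_frame [simp]:
  "(a *\<^sub>R radial_dir R t + b *\<^sub>R tangential_dir R t + c *\<^sub>R vertical_dir) \<bullet> radial_dir R t = a"
  by (simp add: radial_dir_def tangential_dir_def vertical_dir_def inner_vec_def sum_3
      algebra_simps flip: distrib_left power2_eq_square)

lemma inner_tangential_dir_frame [simp]:
  "(a *\<^sub>R radial_dir R t + b *\<^sub>R tangential_dir R t + c *\<^sub>R vertical_dir) \<bullet> tangential_dir R t = b"
  by (simp add: radial_dir_def tangential_dir_def vertical_dir_def inner_vec_def sum_3
      algebra_simps flip: distrib_left power2_eq_square)

lemma norm_radial_dir [simp]: "norm (radial_dir R t) = 1"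
  by (simp add: radial_dir_def norm_eq_sqrt_inner inner_vec_def sum_3 flip: power2_eq_square)

lemma radial_dir_add_half_turn:
  "R \<noteq> 0 \<Longrightarrow> radial_dir R (t + pi * R) = - radial_dir R t"
  by (simp add: radial_dir_def add_divide_distrib vec_eq_iff forall_3)

lemma tangential_dir_add_half_turn:
  "R \<noteq> 0 \<Longrightarrow> tangential_dir R (t + pi * R) = - tangential_dir R t"
  by (simp add: tangential_dir_def add_divide_distrib vec_eq_iff forall_3)

lemma circular_tractrix_eq_frame:
  "circular_tractrix R c1 c2 t =
     xi1 R c1 t *\<^sub>R radial_dir R t + xi2 R c1 t *\<^sub>R tangential_dir R t + xi3 R c1 c2 t *\<^sub>R vertical_dir"
  by (simp add: circular_tractrix_def radial_dir_def tangential_dir_def vertical_dir_def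
      vec_eq_iff forall_3 algebra_simps)

lemma tractrix_denom_pos:
  fixes c1 R y :: real
  assumes c1: "\<bar>c1\<bar> < R"
  shows "0 < c1 / R + cosh y"
proof -
  have "0 < R" using c1 abs_ge_zero [of c1] by linarith
  with c1 have "\<bar>c1 / R\<bar> < 1" by (simp add: abs_divide)
  with cosh_real_ge_1 [of y] show ?thesis by linarith
qed

lemma tractrix_lambda_sq: "1 \<le> R \<Longrightarrow> (tractrix_lambda R)\<^sup>2 = 1 - 1 / R\<^sup>2"
  by (simp add: tractrix_lambda_def power_divide diff_divide_distrib)

lemma xi1_has_real_derivative:
  assumes "\<bar>c1\<bar> < R"
  shows "(xi1 R c1 has_real_derivative
     (R - 1 / R) * (c1 / R) * tractrix_lambda R * sinh (tractrix_lambda R * t)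
       / (c1 / R + cosh (tractrix_lambda R * t))\<^sup>2) (at t)"
proof -
  \<comment> \<open>Abstracting \<open>c1 / R\<close> keeps \<open>divide_simps\<close> from splitting the denominator
    on \<open>R = 0\<close>.\<close>
  define b where "b = c1 / R"
  have D: "b + cosh (tractrix_lambda R * t) \<noteq> 0"
    using tractrix_denom_pos [OF assms, of "tractrix_lambda R * t"] by (simp add: b_def)
  show ?thesis
    unfolding xi1_def [abs_def] b_def [symmetric]
    by (rule derivative_eq_intros refl D)+
      (use D in \<open>simp add: divide_simps power2_eq_square algebra_simps\<close>)
qed

lemma xi3_has_real_derivative:
  assumes "\<bar>c1\<bar> < R"
  shows "(xi3 R c1 c2 has_real_derivative
     - c2 * (tractrix_lambda R)\<^sup>2 * sinh (tractrix_lambda R * t)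
       / (c1 / R + cosh (tractrix_lambda R * t))\<^sup>2) (at t)"
proof -
  define b where "b = c1 / R"
  have D: "b + cosh (tractrix_lambda R * t) \<noteq> 0"
    using tractrix_denom_pos [OF assms, of "tractrix_lambda R * t"] by (simp add: b_def)
  show ?thesis
    unfolding xi3_def [abs_def] b_def [symmetric]
    by (rule derivative_eq_intros refl D)+
      (use D in \<open>simp add: divide_simps power2_eq_square algebra_simps\<close>)
qed

lemma xi2_has_real_derivative:
  assumes "1 \<le> R" "\<bar>c1\<bar> < R"
  shows "(xi2 R c1 has_real_derivative
     xi1 R c1 t / R - (tractrix_lambda R * sinh (tractrix_lambda R * t)
       / (c1 / R + cosh (tractrix_lambda R * t)))\<^sup>2) (at t)"
proof -
  let ?L = "tractrix_lambda R" and ?D = "c1 / R + cosh (tractrix_lambda R * t)"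
  have D: "?D \<noteq> 0" using tractrix_denom_pos [OF assms(2), of "?L * t"] by simp
  have "xi1 R c1 t / R = (1 - 1 / R\<^sup>2) * cosh (?L * t) / ?D"
    using assms(1) by (simp add: xi1_def field_simps power2_eq_square)
  then have xi1: "xi1 R c1 t / R = ?L\<^sup>2 * cosh (?L * t) / ?D"
    by (simp add: tractrix_lambda_sq [OF assms(1)])
  show ?thesis
    unfolding xi2_def [abs_def] xi1
    by (rule derivative_eq_intros refl D)+
      (use D in \<open>simp add: divide_simps power2_eq_square algebra_simps\<close>)
qed

lemma circular_tractrix_has_vector_derivative_0_iff:
  assumes "1 < R" "\<bar>c1\<bar> < R"
  shows "(circular_tractrix R c1 c2 has_vector_derivative 0) (at t) \<longleftrightarrow> t = 0"
proof -
  let ?L = "tractrix_lambda R" and ?D = "c1 / R + cosh (tractrix_lambda R * t)"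
  define v1 where "v1 = (R - 1 / R) * (c1 / R) * ?L * sinh (?L * t) / ?D\<^sup>2 + xi2 R c1 t / R"
  define v3 where "v3 = - c2 * ?L\<^sup>2 * sinh (?L * t) / ?D\<^sup>2"
  define s where "s = ?L * sinh (?L * t) / ?D"
  have frame: "circular_tractrix R c1 c2 = (\<lambda>t. xi1 R c1 t *\<^sub>R radial_dir R t
      + xi2 R c1 t *\<^sub>R tangential_dir R t + xi3 R c1 c2 t *\<^sub>R vertical_dir)"
    using circular_tractrix_eq_frame by blast
  have deriv: "(circular_tractrix R c1 c2 has_vector_derivative
      v1 *\<^sub>R radial_dir R t + (- s\<^sup>2) *\<^sub>R tangential_dir R t + v3 *\<^sub>R vertical_dir) (at t)"
    using rotating_frame_has_vector_derivative [where R = R,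
        OF xi1_has_real_derivative [OF assms(2)] xi2_has_real_derivative [OF less_imp_le [OF assms(1)] assms(2)]
        xi3_has_real_derivative [OF assms(2), of c2]]
    unfolding frame v1_def v3_def s_def by simp
  show ?thesis
  proof
    assume "(circular_tractrix R c1 c2 has_vector_derivative 0) (at t)"
    with deriv have
      "v1 *\<^sub>R radial_dir R t + (- s\<^sup>2) *\<^sub>R tangential_dir R t + v3 *\<^sub>R vertical_dir = 0"
      using vector_derivative_unique_at by blast
    then have "- s\<^sup>2 = 0"
      using inner_tangential_dir_frame [of v1 R t "- s\<^sup>2" v3] by simp
    moreover have "?L > 0" and "?D > 0"
      using assms by (simp_all add: tractrix_lambda_def tractrix_denom_pos)
    ultimately have "sinh (?L * t) = 0" by (simp add: s_def)
    with \<open>?L > 0\<close> show "t = 0" by (simp add: sinh_real_zero_iff)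
  next
    assume "t = 0"
    then have "v1 = 0" "s = 0" "v3 = 0" by (simp_all add: v1_def v3_def s_def xi2_def)
    with deriv show "(circular_tractrix R c1 c2 has_vector_derivative 0) (at t)" by simp
  qed
qed

lemma xi1_ge_R_minus_1:
  assumes "1 < R" "\<bar>c1\<bar> \<le> 1"
  shows "R - 1 \<le> xi1 R c1 t"
proof -
  let ?C = "cosh (tractrix_lambda R * t)"
  have D: "0 < c1 / R + ?C" using assms by (intro tractrix_denom_pos) auto
  have "(R - 1) * (c1 / R + ?C) \<le> (R - 1) * (1 / R + ?C)"
    using assms by (intro mult_left_mono) (auto simp: divide_right_mono)
  also have "\<dots> = (R - 1 / R) * ?C - (?C - 1) * (R - 1) / R"
    using assms by (simp add: field_simps)
  also have "\<dots> \<le> (R - 1 / R) * ?C"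
    using assms cosh_real_ge_1 [of "tractrix_lambda R * t"] by simp
  finally show ?thesis using D by (simp add: xi1_def le_divide_eq)
qed

lemma circular_tractrix_half_turn_dist:
  assumes "1 < R" "\<bar>c1\<bar> \<le> 1"
  shows "2 * (R - 1)
    \<le> dist (circular_tractrix R c1 c2 t) (circular_tractrix R c1 c2 (t + pi * R))"
proof -
  let ?f = "circular_tractrix R c1 c2" and ?s = "t + pi * R"
  have "?f t - ?f ?s = (xi1 R c1 t + xi1 R c1 ?s) *\<^sub>R radial_dir R t
      + (xi2 R c1 t + xi2 R c1 ?s) *\<^sub>R tangential_dir R t
      + (xi3 R c1 c2 t - xi3 R c1 c2 ?s) *\<^sub>R vertical_dir"
    using assms(1) unfolding circular_tractrix_eq_frame
    by (simp add: radial_dir_add_half_turn tangential_dir_add_half_turn algebra_simps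
        del: mult.commute)
  then have "xi1 R c1 t + xi1 R c1 ?s = (?f t - ?f ?s) \<bullet> radial_dir R t" by simp
  also have "\<dots> \<le> dist (?f t) (?f ?s)"
    using norm_cauchy_schwarz [of "?f t - ?f ?s" "radial_dir R t"] by (simp add: dist_norm)
  moreover have "2 * (R - 1) \<le> xi1 R c1 t + xi1 R c1 ?s"
    using xi1_ge_R_minus_1 [OF assms, of t] xi1_ge_R_minus_1 [OF assms, of ?s] by simp
  ultimately show ?thesis by linarith
qed

lemma curve_length_ge_polygon:
  assumes "sorted ts" "set ts \<subseteq> S"
  shows "ereal (\<Sum>i < length ts - 1. dist (f (ts ! i)) (f (ts ! (i + 1)))) \<le> curve_length f S"
  unfolding curve_length_def using assms by (intro SUP_upper) auto

lemma curve_length_eq_infinity_if_shift_gap: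
  fixes f :: "real \<Rightarrow> 'a::metric_space"
  assumes "0 < p" "0 < \<delta>" and gap: "\<And>t. \<delta> \<le> dist (f t) (f (t + p))"
    and progressions: "\<And>n. \<exists>a. \<forall>k\<le>n. a + real k * p \<in> S"
  shows "curve_length f S = \<infinity>"
proof (rule ereal_top)
  fix B :: real
  obtain n :: nat where n: "B < real n * \<delta>" using reals_Archimedean3 [OF assms(2)] by blast
  obtain a where a: "\<forall>k\<le>n. a + real k * p \<in> S" using progressions by blast
  define ts where "ts = map (\<lambda>k. a + real k * p) [0..<Suc n]"
  have nth_ts: "ts ! i = a + real i * p" if "i \<le> n" for i
    using that by (simp add: ts_def del: upt_Suc)
  have "sorted ts"
    unfolding ts_def sorted_iff_nth_mono using assms(1)
    by (auto simp del: upt_Suc intro!: mult_right_mono)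
  moreover have "set ts \<subseteq> S" using a by (auto simp: ts_def)
  moreover have "real n * \<delta> \<le> (\<Sum>i < length ts - 1. dist (f (ts ! i)) (f (ts ! (i + 1))))"
  proof -
    have "real n * \<delta> = (\<Sum>i < n. \<delta>)" by simp
    also have "\<dots> \<le> (\<Sum>i < n. dist (f (ts ! i)) (f (ts ! (i + 1))))"
    proof (intro sum_mono)
      fix i assume "i \<in> {..<n}"
      then show "\<delta> \<le> dist (f (ts ! i)) (f (ts ! (i + 1)))"
        using gap [of "a + real i * p"] by (simp add: nth_ts algebra_simps)
    qed
    finally show ?thesis by (simp add: ts_def)
  qed
  ultimately show "ereal B \<le> curve_length f S"
    using n curve_length_ge_polygon [of ts S f] by (meson ereal_less_eq(3) less_imp_le order_trans)
qed

theorem mainTheorem2: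
  fixes R c1 c2 :: real
  assumes "R > 1" and "c1\<^sup>2 + c2\<^sup>2 = 1"
  shows "(\<forall>t. (circular_tractrix R c1 c2 has_vector_derivative 0) (at t) \<longleftrightarrow> t = 0)
    \<and> curve_length (circular_tractrix R c1 c2) {0..} = \<infinity>
    \<and> curve_length (circular_tractrix R c1 c2) {..0} = \<infinity>"
proof -
  have "c1\<^sup>2 \<le> 1" using assms(2) zero_le_power2 [of c2] by linarith
  then have c1: "\<bar>c1\<bar> \<le> 1" by (simp add: abs_square_le_1)
  have period: "0 < pi * R" using assms(1) by simp
  have infinite: "curve_length (circular_tractrix R c1 c2) S = \<infinity>"
    if "\<And>n. \<exists>a. \<forall>k\<le>n. a + real k * (pi * R) \<in> S" for S
    using curve_length_eq_infinity_if_shift_gap [where f = "circular_tractrix R c1 c2",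
        OF period _ circular_tractrix_half_turn_dist [OF assms(1) c1] that] assms(1) by simp
  have "curve_length (circular_tractrix R c1 c2) {0..} = \<infinity>"
    by (rule infinite, rule exI [of _ 0]) (use period in simp)
  moreover have "curve_length (circular_tractrix R c1 c2) {..0} = \<infinity>"
  proof (rule infinite)
    fix n show "\<exists>a. \<forall>k\<le>n. a + real k * (pi * R) \<in> {..0}"
      using assms(1) by (intro exI [of _ "- real n * (pi * R)"]) (auto intro!: mult_right_mono)
  qed
  ultimately show ?thesis
    using circular_tractrix_has_vector_derivative_0_iff [OF assms(1)] c1 assms(1) by auto
qed

end
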